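(* For every integer $L\geq 0$, \[ \sum_{j=-\infty}^{\infty} (-1)^j \left(\frac{j}{3}\right) {2L+1 \brack L-j}_{q^2} q^{j^2} = q^{1+2L}\,\frac{(q^3;q^6)_L}{(q;q^2)_L}. \]
   Context: For a variable $a$ and integer $n\ge 0$, $(a;q)_n=(1-a)(1-aq)\cdots(1-aq^{n-1})$ (with $(a;q)_0=1$). The $q$-binomial coefficient is ${A \brack B}_q=\frac{(q;q)_A}{(q;q)_B(q;q)_{A-B}}$ if $0\le B\le A$ are integers, and $0$ otherwise; ${A\brack B}_{q^2}$ is the same with $q$ replaced by $q^2$. $\left(\frac{j}{3}\right)$ is the Legendre symbol modulo 3: it equals $1$ if $j\equiv 1 \pmod 3$, $-1$ if $j\equiv -1\pmod 3$, and $0$ if $3\mid j$. *)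

theory Defs
  imports "HOL-Number_Theory.Number_Theory"
begin

definition qpoch :: "'a::comm_ring_1 \<Rightarrow> 'a \<Rightarrow> nat \<Rightarrow> 'a" where
  "qpoch a q n = (\<Prod>k<n. 1 - a * q ^ k)"

definition qbinom :: "'a::field \<Rightarrow> int \<Rightarrow> int \<Rightarrow> 'a" where
  "qbinom q A B = (if 0 \<le> B \<and> B \<le> A
      then qpoch q q (nat A) / (qpoch q q (nat B) * qpoch q q (nat (A - B)))
      else 0)"

end

(* Adjoin a primitive cube root of unity omega. Put k = L - j: the Legendre symbol (j/3) is the
   omega-coefficient of omega^(L+2k), so q^(3L^2+2L) times the left-hand side is the
   omega-coefficient of (-omega)^L times
     sum_k [2L+1, k]_(q^2) (-1)^k q^(k(k-1)) (q omega^2)^k (q^(2L))^(2L+1-k),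
   which by the q-binomial theorem is the product of the factors q^(2L) - q^(2i+1) omega^2, i <= 2L.
   Since 1 + omega + omega^2 = 0, the factors i and 2L-1-i multiply to
   -omega^2 q^(2L+2i+1) (1 + y + y^2) with y = q^(2(L-1-i)+1), and the last factor i = 2L
   contributes the omega-coefficient q^(4L+1). Finally 1 + y + y^2 = (1 - y^3)/(1 - y) turns the
   product of the 1 + y + y^2 into (q^3;q^6)_L / (q;q^2)_L. The power of q cancels when q <> 0,
   and for q = 0 both sides vanish. *)

theory Submission
  imports Defs
begin

(* Eisenstein a b represents a + b omega with omega^2 = -1 - omega, i.e. the ring R[X]/(X^2+X+1)
   obtained by adjoining a primitive cube root of unity omega = eis_omega. *)
datatype 'a eisenstein = Eisenstein (re: 'a) (im: 'a)

lemma eisenstein_eq_iff: "x = y \<longleftrightarrow> re x = re y \<and> im x = im y"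
  by (cases x; cases y) auto

instantiation eisenstein :: (comm_ring_1) comm_ring_1
begin
definition "0 = Eisenstein 0 0"
definition "1 = Eisenstein 1 0"
definition "x + y = Eisenstein (re x + re y) (im x + im y)"
definition "x - y = Eisenstein (re x - re y) (im x - im y)"
definition "- x = Eisenstein (- re x) (- im x)"
definition "x * y = Eisenstein (re x * re y - im x * im y) (re x * im y + im x * re y - im x * im y)"
instance
  by standard (simp_all add: eisenstein_eq_iff zero_eisenstein_def one_eisenstein_def
      plus_eisenstein_def minus_eisenstein_def uminus_eisenstein_def times_eisenstein_def
      algebra_simps)
end

lemma re_eisenstein_simps [simp]:
    "re 0 = 0" "re 1 = 1" "re (x + y) = re x + re y" "re (x - y) = re x - re y"
    "re (- x) = - re x" "re (x * y) = re x * re y - im x * im y"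
  and im_eisenstein_simps [simp]:
    "im 0 = 0" "im 1 = 0" "im (x + y) = im x + im y" "im (x - y) = im x - im y"
    "im (- x) = - im x" "im (x * y) = re x * im y + im x * re y - im x * im y"
  by (simp_all add: zero_eisenstein_def one_eisenstein_def plus_eisenstein_def
      minus_eisenstein_def uminus_eisenstein_def times_eisenstein_def)

lemma im_sum: "im (sum f A) = (\<Sum>x\<in>A. im (f x))"
  by (induction A rule: infinite_finite_induct) auto

definition eis_of :: "'a::comm_ring_1 \<Rightarrow> 'a eisenstein" where
  "eis_of a = Eisenstein a 0"

definition eis_omega :: "'a::comm_ring_1 eisenstein" where
  "eis_omega = Eisenstein 0 1"

lemma re_eis_of [simp]: "re (eis_of a) = a" and im_eis_of [simp]: "im (eis_of a) = 0"
  by (simp_all add: eis_of_def)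

lemma eis_of_0: "eis_of 0 = 0" and eis_of_1: "eis_of 1 = 1"
  by (simp_all add: eisenstein_eq_iff)

lemma eis_of_add: "eis_of (a + b) = eis_of a + eis_of b"
  by (simp add: eisenstein_eq_iff)

lemma eis_of_mult: "eis_of (a * b) = eis_of a * eis_of b"
  by (simp add: eisenstein_eq_iff)

lemma eis_of_minus_one: "eis_of (-1) = -1"
  by (simp add: eisenstein_eq_iff)

lemma eis_of_power: "eis_of (a ^ n) = eis_of a ^ n"
  by (induction n) (simp_all add: eisenstein_eq_iff)

lemma eis_of_prod: "eis_of (prod f A) = (\<Prod>x\<in>A. eis_of (f x))"
  by (induction A rule: infinite_finite_induct) (simp_all add: eisenstein_eq_iff)

lemma eis_omega_squared: "eis_omega\<^sup>2 = Eisenstein (-1) (-1)"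
  by (simp add: eisenstein_eq_iff eis_omega_def power2_eq_square)

lemma eis_omega_cube: "eis_omega ^ 3 = 1"
  by (simp add: eisenstein_eq_iff eis_omega_def power3_eq_cube)

lemma im_eis_omega_power:
  "im (eis_omega ^ m) = (if m mod 3 = 1 then 1 else if m mod 3 = 2 then -1 else 0)"
proof -
  have "eis_omega ^ m = (eis_omega ^ 3) ^ (m div 3) * eis_omega ^ (m mod 3)"
    by (simp flip: power_mult power_add)
  also have "\<dots> = eis_omega ^ (m mod 3)"
    by (simp add: eis_omega_cube)
  finally have "im (eis_omega ^ m) = im (eis_omega ^ (m mod 3))"
    by (rule arg_cong)
  moreover have "m mod 3 = 0 \<or> m mod 3 = 1 \<or> m mod 3 = 2"
    by arith
  ultimately show ?thesis
    by (auto simp: eis_omega_def power2_eq_square)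
qed

lemma QuadRes_3_iff: "QuadRes 3 x \<longleftrightarrow> x mod 3 \<noteq> 2"
proof
  assume "QuadRes 3 x"
  then obtain y where "[y\<^sup>2 = x] (mod 3)"
    by (auto simp: QuadRes_def)
  moreover have "y\<^sup>2 mod 3 = (y mod 3)\<^sup>2 mod 3"
    by (simp add: power_mod)
  moreover have "y mod 3 \<in> {0, 1, 2}"
    by auto
  ultimately show "x mod 3 \<noteq> 2"
    by (auto simp: cong_def)
next
  assume "x mod 3 \<noteq> 2"
  then have "x mod 3 = 0 \<or> x mod 3 = 1"
    by arith
  then have "[(x mod 3)\<^sup>2 = x] (mod 3)"
    by (auto simp: cong_def)
  then show "QuadRes 3 x"
    unfolding QuadRes_def by blast
qed

lemma Legendre_3: "Legendre x 3 = (if x mod 3 = 1 then 1 else if x mod 3 = 2 then -1 else 0)"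
  by (auto simp: Legendre_def QuadRes_3_iff cong_def)

lemma of_int_Legendre_3_diff:
  "of_int (Legendre (int m - int k) 3) = im (eis_omega ^ (m + 2 * k))"
proof -
  have "(int m - int k) mod 3 = (int (m + 2 * k) + (- int k) * 3) mod 3"
    by simp
  also have "\<dots> = int ((m + 2 * k) mod 3)"
    by (simp only: mod_mult_self1 of_nat_mod) simp
  finally show ?thesis
    by (simp add: Legendre_3 im_eis_omega_power)
qed

lemma minus_one_power_nat_abs_diff:
  "(-1 :: 'a::ring_1) ^ nat \<bar>int m - int k\<bar> = (-1) ^ (m + k)"
proof -
  have "m + k = nat \<bar>int m - int k\<bar> + 2 * min m k"
    by linarith
  then show ?thesis
    by (simp add: power_add power_mult)
qed

(* The Gaussian binomial via the q-Pascal rule, so that it needs no division. *)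
fun gauss_binomial :: "'a::comm_ring_1 \<Rightarrow> nat \<Rightarrow> nat \<Rightarrow> 'a" where
  "gauss_binomial Q n 0 = 1"
| "gauss_binomial Q 0 (Suc k) = 0"
| "gauss_binomial Q (Suc n) (Suc k) = gauss_binomial Q n k + Q ^ Suc k * gauss_binomial Q n (Suc k)"

lemma gauss_binomial_eq_0: "n < k \<Longrightarrow> gauss_binomial Q n k = 0"
  by (induction Q n k rule: gauss_binomial.induct) auto

lemma gauss_binomial_same [simp]: "gauss_binomial Q n n = 1"
  by (induction n) (simp_all add: gauss_binomial_eq_0)

lemma qpoch_0 [simp]: "qpoch a Q 0 = 1"
  by (simp add: qpoch_def)

lemma qpoch_Suc: "qpoch a Q (Suc n) = qpoch a Q n * (1 - a * Q ^ n)"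
  by (simp add: qpoch_def)

lemma qpoch_eq_0_iff:
  fixes a Q :: "'a::idom"
  shows "qpoch a Q n = 0 \<longleftrightarrow> (\<exists>k<n. a * Q ^ k = 1)"
  by (auto simp: qpoch_def prod_zero_iff)

lemma gauss_binomial_mult_qpoch:
  "k \<le> n \<Longrightarrow> gauss_binomial Q n k * qpoch Q Q k * qpoch Q Q (n - k) = qpoch Q Q n"
proof (induction n arbitrary: k)
  case 0
  then show ?case
    by simp
next
  case (Suc n)
  show ?case
  proof (cases k)
    case 0
    then show ?thesis
      by simp
  next
    case k: (Suc m)
    show ?thesis
    proof (cases "m = n")
      case True
      then show ?thesis
        using k by simp
    next
      case False
      then have "m < n"
        using Suc.prems k by simp
      then obtain d where n: "n = m + Suc d"
        by (auto dest: less_imp_Suc_add)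
      have IH_m: "gauss_binomial Q n m * qpoch Q Q m * qpoch Q Q (Suc d) = qpoch Q Q n"
        using Suc.IH[of m] n by simp
      have IH_Suc_m: "gauss_binomial Q n (Suc m) * qpoch Q Q (Suc m) * qpoch Q Q d = qpoch Q Q n"
        using Suc.IH[of "Suc m"] n by simp
      have "gauss_binomial Q (Suc n) k * qpoch Q Q k * qpoch Q Q (Suc n - k)
          = gauss_binomial Q n m * qpoch Q Q m * qpoch Q Q (Suc d) * (1 - Q ^ Suc m)
            + gauss_binomial Q n (Suc m) * qpoch Q Q (Suc m) * qpoch Q Q d
              * (Q ^ Suc m * (1 - Q ^ Suc d))"
        using k n by (simp add: qpoch_Suc algebra_simps)
      also have "\<dots> = qpoch Q Q n * (1 - Q ^ Suc n)"
        unfolding IH_m IH_Suc_m by (simp add: n algebra_simps power_add)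
      also have "\<dots> = qpoch Q Q (Suc n)"
        by (simp add: qpoch_Suc)
      finally show ?thesis .
    qed
  qed
qed

lemma qbinom_eq_gauss_binomial:
  fixes Q :: "'a::field"
  assumes "qpoch Q Q n \<noteq> 0" and "k \<le> n"
  shows "qbinom Q (int n) (int k) = gauss_binomial Q n k"
proof -
  have "qpoch Q Q k \<noteq> 0" and "qpoch Q Q (n - k) \<noteq> 0"
    using assms by (auto simp: qpoch_eq_0_iff)
  moreover have "nat (int n - int k) = n - k"
    using assms(2) by simp
  ultimately show ?thesis
    using assms gauss_binomial_mult_qpoch[of k n Q] by (simp add: qbinom_def field_simps)
qed

lemma gauss_binomial_eis_of: "gauss_binomial (eis_of Q) n k = eis_of (gauss_binomial Q n k)"
  by (induction Q n k rule: gauss_binomial.induct)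
    (simp_all add: eis_of_0 eis_of_1 eis_of_add eis_of_mult eis_of_power)

lemma choose_two_Suc: "Suc k choose 2 = (k choose 2) + k"
  by (simp add: numeral_2_eq_2)

lemma prod_diff_eq_gauss_binomial_sum:
  fixes a b Q :: "'a::comm_ring_1"
  shows "(\<Prod>i<n. a - b * Q ^ i)
       = (\<Sum>k\<le>n. gauss_binomial Q n k * (-1) ^ k * Q ^ (k choose 2) * b ^ k * a ^ (n - k))"
proof (induction n arbitrary: b)
  case 0
  show ?case
    by (simp add: binomial_eq_0)
next
  case (Suc n)
  define c where "c k = (-1) ^ k * Q ^ (k choose 2) * b ^ k" for k
  define t where "t k = gauss_binomial Q n k * Q ^ k * c k * a ^ (n - k)" for k
  have c_Suc: "c (Suc k) = - b * Q ^ k * c k" for k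
    by (simp add: c_def choose_two_Suc power_add algebra_simps)
  have "(\<Prod>i<Suc n. a - b * Q ^ i) = (a - b) * (\<Prod>i<n. a - (b * Q) * Q ^ i)"
    unfolding prod.lessThan_Suc_shift by (simp add: mult.assoc)
  also have "\<dots> = (a - b) * (\<Sum>k\<le>n. t k)"
    unfolding Suc.IH t_def c_def by (simp add: power_mult_distrib mult_ac)
  also have "\<dots> = a * (\<Sum>k\<le>n. t k) - b * (\<Sum>k\<le>n. t k)"
    by (rule left_diff_distrib)
  also have "a * (\<Sum>k\<le>n. t k)
      = a ^ Suc n + (\<Sum>k\<le>n. gauss_binomial Q n (Suc k) * Q ^ Suc k * c (Suc k) * a ^ (n - k))"
  proof -
    have "a * (\<Sum>k\<le>n. t k)
        = (\<Sum>k\<le>Suc n. gauss_binomial Q n k * Q ^ k * c k * a ^ (Suc n - k))"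
      by (auto simp: t_def sum_distrib_left gauss_binomial_eq_0 Suc_diff_le mult_ac
          intro: sum.cong)
    then show ?thesis
      unfolding sum.atMost_Suc_shift by (simp add: c_def binomial_eq_0)
  qed
  also have "b * (\<Sum>k\<le>n. t k) = - (\<Sum>k\<le>n. gauss_binomial Q n k * c (Suc k) * a ^ (n - k))"
    by (simp add: t_def c_Suc sum_distrib_left flip: sum_negf) (simp add: algebra_simps)
  also have "a ^ Suc n + (\<Sum>k\<le>n. gauss_binomial Q n (Suc k) * Q ^ Suc k * c (Suc k) * a ^ (n - k))
      - - (\<Sum>k\<le>n. gauss_binomial Q n k * c (Suc k) * a ^ (n - k))
      = a ^ Suc n + (\<Sum>k\<le>n. gauss_binomial Q (Suc n) (Suc k) * c (Suc k) * a ^ (n - k))"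
    by (simp add: sum.distrib[symmetric] algebra_simps)
  also have "\<dots> = (\<Sum>k\<le>Suc n. gauss_binomial Q (Suc n) k * c k * a ^ (Suc n - k))"
    unfolding sum.atMost_Suc_shift by (simp add: c_def binomial_eq_0)
  finally show ?case
    by (simp add: c_def mult.assoc)
qed

lemma prod_lessThan_double_pairs:
  fixes f :: "nat \<Rightarrow> 'a::comm_monoid_mult"
  shows "(\<Prod>i<2 * n. f i) = (\<Prod>i<n. f i * f (2 * n - Suc i))"
proof -
  have "(\<Prod>i<2 * n. f i) = (\<Prod>i<n. f i) * (\<Prod>i\<in>{n..<n + n}. f i)"
    by (simp add: mult_2 lessThan_atLeast0 prod.atLeastLessThan_concat)
  also have "(\<Prod>i\<in>{n..<n + n}. f i) = (\<Prod>i<n. f (i + n))"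
    using prod.shift_bounds_nat_ivl[of f 0 n n] by (simp add: lessThan_atLeast0)
  also have "\<dots> = (\<Prod>i<n. f (n - Suc i + n))"
    by (rule prod.nat_diff_reindex[symmetric])
  also have "\<dots> = (\<Prod>i<n. f (2 * n - Suc i))"
    by (intro prod.cong) (auto simp: mult_2)
  finally show ?thesis
    by (simp add: prod.distrib)
qed

lemma eis_factor_pair:
  "(eis_of (u * w) - eis_of u * eis_omega\<^sup>2) * (eis_of (u * w) - eis_of (u * w\<^sup>2) * eis_omega\<^sup>2)
   = - eis_omega\<^sup>2 * eis_of (u * (u * w) * (1 + w + w\<^sup>2))"
  unfolding eis_omega_squared by (simp add: eisenstein_eq_iff algebra_simps power2_eq_square)

lemma sum_lessThan_odd: "(\<Sum>i<n. 2 * i + 1) = n * (n::nat)"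
  by (induction n) auto

lemma eis_prod_odd_powers:
  fixes q :: "'a::comm_ring_1"
  shows "(\<Prod>i<2 * L + 1. eis_of (q ^ (2 * L)) - eis_of (q ^ (2 * i + 1)) * eis_omega\<^sup>2)
       = (- eis_omega\<^sup>2) ^ L
         * eis_of (q ^ (3 * L * L) * (\<Prod>k<L. 1 + q ^ (2 * k + 1) + (q ^ (2 * k + 1))\<^sup>2))
         * (eis_of (q ^ (2 * L)) - eis_of (q ^ (4 * L + 1)) * eis_omega\<^sup>2)"
proof -
  define g where "g i = eis_of (q ^ (2 * L)) - eis_of (q ^ (2 * i + 1)) * eis_omega\<^sup>2" for i
  define r where "r k = 1 + q ^ (2 * k + 1) + (q ^ (2 * k + 1))\<^sup>2" for k
  have pair: "g i * g (2 * L - Suc i)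
      = - eis_omega\<^sup>2 * eis_of (q ^ (2 * L + 2 * i + 1) * r (L - Suc i))"
    if i: "i < L" for i
  proof -
    obtain d where L: "L = Suc (i + d)"
      using i less_iff_Suc_add by auto
    define u where "u = q ^ (2 * i + 1)"
    define w where "w = q ^ (2 * d + 1)"
    have "u * w = q ^ (2 * L)" and "u * w\<^sup>2 = q ^ (2 * (2 * L - Suc i) + 1)"
      and "u * (u * w) = q ^ (2 * L + 2 * i + 1)"
      unfolding u_def w_def power_mult[symmetric] power_add[symmetric]
      by (intro arg_cong[where f = "power q"]; simp add: L)+
    moreover have "1 + w + w\<^sup>2 = r (L - Suc i)"
      by (simp add: w_def r_def L)
    ultimately show ?thesis
      using eis_factor_pair[of u w] by (simp add: g_def u_def)
  qed
  have "(\<Prod>i<2 * L + 1. g i) = (\<Prod>i<L. g i * g (2 * L - Suc i)) * g (2 * L)"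
    by (simp add: prod_lessThan_double_pairs)
  also have "\<dots> = (\<Prod>i<L. - eis_omega\<^sup>2 * eis_of (q ^ (2 * L + 2 * i + 1) * r (L - Suc i)))
      * g (2 * L)"
    by (simp add: pair)
  also have "\<dots> = (- eis_omega\<^sup>2) ^ L
      * eis_of (\<Prod>i<L. q ^ (2 * L + 2 * i + 1) * r (L - Suc i)) * g (2 * L)"
    by (subst eis_of_prod) (simp only: prod.distrib prod_constant card_lessThan)
  also have "(\<Prod>i<L. q ^ (2 * L + 2 * i + 1) * r (L - Suc i)) = q ^ (3 * L * L) * (\<Prod>k<L. r k)"
  proof -
    have "(\<Sum>i<L. 2 * L + (2 * i + 1)) = 3 * L * L"
      unfolding sum.distrib[of "\<lambda>_. 2 * L"] sum_lessThan_odd by simp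
    then show ?thesis
      by (simp only: prod.distrib prod.nat_diff_reindex power_sum[symmetric] add.assoc)
  qed
  also have "g (2 * L) = eis_of (q ^ (2 * L)) - eis_of (q ^ (4 * L + 1)) * eis_omega\<^sup>2"
    by (simp add: g_def)
  finally show ?thesis
    unfolding g_def r_def .
qed

lemma double_choose_two_add: "2 * (k choose 2) + k = k * k"
  by (induction k) (simp_all add: choose_two_Suc)

lemma gauss_binomial_exponent:
  assumes "k \<le> 2 * L + 1"
  shows "2 * (k choose 2) + k + 2 * L * (2 * L + 1 - k) = 3 * L * L + 2 * L + nat ((int L - int k)\<^sup>2)"
proof -
  have "int (k * k + 2 * L * (2 * L + 1 - k)) = int k * int k + 2 * int L * (2 * int L + 1 - int k)"
    using assms by (simp add: of_nat_diff)
  also have "\<dots> = int (3 * L * L + 2 * L) + (int L - int k)\<^sup>2"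
    by (simp add: power2_eq_square algebra_simps)
  also have "\<dots> = int (3 * L * L + 2 * L + nat ((int L - int k)\<^sup>2))"
    by simp
  finally show ?thesis
    by (simp only: of_nat_eq_iff double_choose_two_add)
qed

lemma minus_eis_omega_squared_mult: "(- eis_omega\<^sup>2) * (- eis_omega) = 1"
  using eis_omega_cube by (simp add: power2_eq_square power3_eq_cube)

lemma im_eis_prod_odd_powers:
  fixes q :: "'a::comm_ring_1"
  shows "im ((- eis_omega) ^ L
            * (\<Prod>i<2 * L + 1. eis_of (q ^ (2 * L)) - eis_of (q ^ (2 * i + 1)) * eis_omega\<^sup>2))
       = q ^ (3 * L * L + 2 * L) * (q ^ (2 * L + 1) * (\<Prod>k<L. 1 + q ^ (2 * k + 1) + (q ^ (2 * k + 1))\<^sup>2))"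
proof -
  have "(- eis_omega) ^ L * (- eis_omega\<^sup>2) ^ L = (1 :: 'a eisenstein)"
    by (metis minus_eis_omega_squared_mult mult.commute power_mult_distrib power_one)
  then have "(- eis_omega) ^ L
        * (\<Prod>i<2 * L + 1. eis_of (q ^ (2 * L)) - eis_of (q ^ (2 * i + 1)) * eis_omega\<^sup>2)
      = eis_of (q ^ (3 * L * L) * (\<Prod>k<L. 1 + q ^ (2 * k + 1) + (q ^ (2 * k + 1))\<^sup>2))
        * (eis_of (q ^ (2 * L)) - eis_of (q ^ (4 * L + 1)) * eis_omega\<^sup>2)"
    unfolding eis_prod_odd_powers by (simp add: mult.assoc[symmetric])
  moreover have "q ^ (4 * L + 1) = q ^ (2 * L) * q ^ (2 * L + 1)"
    unfolding power_add[symmetric] by (rule arg_cong[where f = "power q"]) simp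
  ultimately show ?thesis
    by (simp add: eis_omega_squared power_add mult_ac)
qed

lemma im_eis_prod_odd_powers_gauss_binomial:
  fixes q :: "'a::comm_ring_1"
  shows "im ((- eis_omega) ^ L
            * (\<Prod>i<2 * L + 1. eis_of (q ^ (2 * L)) - eis_of (q ^ (2 * i + 1)) * eis_omega\<^sup>2))
       = q ^ (3 * L * L + 2 * L) * (\<Sum>k\<le>2 * L + 1. (-1) ^ (L + k) * of_int (Legendre (int L - int k) 3)
            * gauss_binomial (q\<^sup>2) (2 * L + 1) k * q ^ nat ((int L - int k)\<^sup>2))"
proof -
  define T where "T k = eis_of (gauss_binomial (q\<^sup>2) (2 * L + 1) k) * (-1) ^ k
      * eis_of (q\<^sup>2) ^ (k choose 2) * (eis_of q * eis_omega\<^sup>2) ^ k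
      * eis_of (q ^ (2 * L)) ^ (2 * L + 1 - k)" for k
  have "(\<Prod>i<2 * L + 1. eis_of (q ^ (2 * L)) - eis_of (q ^ (2 * i + 1)) * eis_omega\<^sup>2)
      = (\<Prod>i<2 * L + 1. eis_of (q ^ (2 * L)) - (eis_of q * eis_omega\<^sup>2) * eis_of (q\<^sup>2) ^ i)"
  proof (intro prod.cong refl)
    fix i
    have "q ^ (2 * i + 1) = q * (q\<^sup>2) ^ i"
      by (simp add: power_mult)
    then show "eis_of (q ^ (2 * L)) - eis_of (q ^ (2 * i + 1)) * eis_omega\<^sup>2
        = eis_of (q ^ (2 * L)) - (eis_of q * eis_omega\<^sup>2) * eis_of (q\<^sup>2) ^ i"
      by (simp add: eis_of_mult eis_of_power mult_ac)
  qed
  also have "\<dots> = (\<Sum>k\<le>2 * L + 1. T k)"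
    unfolding prod_diff_eq_gauss_binomial_sum T_def gauss_binomial_eis_of ..
  finally have expansion: "(- eis_omega) ^ L
      * (\<Prod>i<2 * L + 1. eis_of (q ^ (2 * L)) - eis_of (q ^ (2 * i + 1)) * eis_omega\<^sup>2)
      = (\<Sum>k\<le>2 * L + 1. (- eis_omega) ^ L * T k)"
    by (simp only: sum_distrib_left)
  have im_term: "im ((- eis_omega) ^ L * T k) = q ^ (3 * L * L + 2 * L) * ((-1) ^ (L + k)
      * of_int (Legendre (int L - int k) 3) * gauss_binomial (q\<^sup>2) (2 * L + 1) k
      * q ^ nat ((int L - int k)\<^sup>2))"
    if "k \<le> 2 * L + 1" for k
  proof -
    have "(- eis_omega) ^ L * T k = eis_of (gauss_binomial (q\<^sup>2) (2 * L + 1) k * (-1) ^ (L + k)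
        * ((q\<^sup>2) ^ (k choose 2) * q ^ k * (q ^ (2 * L)) ^ (2 * L + 1 - k))) * eis_omega ^ (L + 2 * k)"
      by (simp add: T_def eis_of_mult eis_of_power eis_of_minus_one power_mult_distrib power_add
          power_mult power_minus[of eis_omega] power2_eq_square mult_ac)
    also have "(q\<^sup>2) ^ (k choose 2) * q ^ k * (q ^ (2 * L)) ^ (2 * L + 1 - k)
        = q ^ (3 * L * L + 2 * L) * q ^ nat ((int L - int k)\<^sup>2)"
      using gauss_binomial_exponent[OF that] by (simp flip: power_add power_mult)
    finally show ?thesis
      by (simp add: of_int_Legendre_3_diff mult_ac)
  qed
  show ?thesis
    unfolding expansion im_sum sum_distrib_left by (intro sum.cong refl im_term) simp
qed

lemma qpoch_cube:
  "qpoch (a ^ 3) (Q ^ 3) n = qpoch a Q n * (\<Prod>k<n. 1 + a * Q ^ k + (a * Q ^ k)\<^sup>2)"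
proof -
  have "1 - a ^ 3 * (Q ^ 3) ^ k = (1 - a * Q ^ k) * (1 + a * Q ^ k + (a * Q ^ k)\<^sup>2)" for k
    by (simp add: algebra_simps power2_eq_square power3_eq_cube power_mult_distrib
        flip: power_mult)
  then show ?thesis
    by (simp add: qpoch_def prod.distrib)
qed

lemma qpoch_odd_powers_nonzero:
  fixes q :: "'a::idom"
  assumes "qpoch (q\<^sup>2) (q\<^sup>2) (2 * L + 1) \<noteq> 0"
  shows "qpoch q (q\<^sup>2) L \<noteq> 0"
proof
  assume "qpoch q (q\<^sup>2) L = 0"
  then obtain k where "k < L" and "q * (q\<^sup>2) ^ k = 1"
    by (auto simp: qpoch_eq_0_iff)
  moreover have "q\<^sup>2 * (q\<^sup>2) ^ (2 * k) = (q * (q\<^sup>2) ^ k)\<^sup>2"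
    by (simp add: power_mult_distrib flip: power_mult)
  ultimately have "2 * k < 2 * L + 1" and "q\<^sup>2 * (q\<^sup>2) ^ (2 * k) = 1"
    by simp_all
  with assms show False
    by (auto simp: qpoch_eq_0_iff)
qed

lemma sum_int_interval_reflect:
  "(\<Sum>j\<in>{- int n - 1..int n}. f j) = (\<Sum>k\<le>2 * n + 1. f (int n - int k))"
  by (rule sum.reindex_bij_witness[where i = "\<lambda>k. int n - int k" and j = "\<lambda>j. nat (int n - j)"])
    auto

lemma sum_Legendre_qbinom_eq_gauss_binomial_sum:
  fixes q :: "'a::field"
  assumes "qpoch (q\<^sup>2) (q\<^sup>2) (2 * L + 1) \<noteq> 0"
  shows "(\<Sum>j\<in>{- int L - 1..int L}. (-1) ^ nat \<bar>j\<bar> * of_int (Legendre j 3)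
            * qbinom (q\<^sup>2) (2 * int L + 1) (int L - j) * q ^ nat (j\<^sup>2))
       = (\<Sum>k\<le>2 * L + 1. (-1) ^ (L + k) * of_int (Legendre (int L - int k) 3)
            * gauss_binomial (q\<^sup>2) (2 * L + 1) k * q ^ nat ((int L - int k)\<^sup>2))"
  unfolding sum_int_interval_reflect
proof (intro sum.cong refl)
  fix k
  assume "k \<in> {..2 * L + 1}"
  then have "qbinom (q\<^sup>2) (2 * int L + 1) (int k) = gauss_binomial (q\<^sup>2) (2 * L + 1) k"
    using qbinom_eq_gauss_binomial[OF assms, of k] by (simp add: add.commute)
  then show "(-1) ^ nat \<bar>int L - int k\<bar> * of_int (Legendre (int L - int k) 3)
      * qbinom (q\<^sup>2) (2 * int L + 1) (int L - (int L - int k)) * q ^ nat ((int L - int k)\<^sup>2)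
    = (-1) ^ (L + k) * of_int (Legendre (int L - int k) 3)
      * gauss_binomial (q\<^sup>2) (2 * L + 1) k * q ^ nat ((int L - int k)\<^sup>2)"
    by (simp add: minus_one_power_nat_abs_diff)
qed

theorem theorem2p6:
  fixes q :: "'a::field" and L :: nat
  assumes "qpoch (q^2) (q^2) (2*L+1) \<noteq> 0"
  shows "(\<Sum>j\<in>{-(int L)-1..int L}.
            (-1) ^ nat \<bar>j\<bar> * of_int (Legendre j 3)
              * qbinom (q^2) (2 * int L + 1) (int L - j) * q ^ nat (j^2))
         = q ^ (1 + 2*L) * qpoch (q^3) (q^6) L / qpoch q (q^2) L"
proof -
  define R where "R = (\<Prod>k<L. 1 + q ^ (2 * k + 1) + (q ^ (2 * k + 1))\<^sup>2)"
  have sum_eq: "(\<Sum>j\<in>{-(int L)-1..int L}.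
            (-1) ^ nat \<bar>j\<bar> * of_int (Legendre j 3)
              * qbinom (q^2) (2 * int L + 1) (int L - j) * q ^ nat (j^2)) = q ^ (2 * L + 1) * R"
  proof (cases "q = 0")
    case True
    then show ?thesis
      by (auto intro!: sum.neutral simp: Legendre_3)
  next
    case False
    with im_eis_prod_odd_powers[of L q] im_eis_prod_odd_powers_gauss_binomial[of L q] show ?thesis
      by (simp add: sum_Legendre_qbinom_eq_gauss_binomial_sum[OF assms] R_def)
  qed
  have "qpoch (q ^ 3) (q ^ 6) L = qpoch q (q\<^sup>2) L * R"
    using qpoch_cube[of q "q\<^sup>2" L] by (simp add: R_def power_mult flip: power_mult)
  with sum_eq qpoch_odd_powers_nonzero[OF assms] show ?thesis
    by (simp add: field_simps)
qed

end
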